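(* Let $w\in\mathcal W_0$ and let $(w_n)_{n\in\mathbb N}$ be a sequence in $\mathcal W_0$ with $\delta_\Box(w_n,w)\to0$. Then $\tilde\Gamma(w_n)\to\tilde\Gamma(w)$ as $n\to\infty$.
   Context: $\mathcal W_0$ is the set of symmetric measurable functions $[0,1]^2\to[0,1]$. $\Phi$ is the set of invertible maps $\phi:[0,1]\to[0,1]$ such that $\phi$ and $\phi^{-1}$ are measure preserving; $w^\phi(x,y)=w(\phi(x),\phi(y))$. Cut norm: $\|w\|_\Box=\sup_{S,T}\big|\int_{S\times T}w\big|$ over measurable $S,T\subseteq[0,1]$; cut distance $\delta_\Box(w_1,w_2)=\inf_{\phi\in\Phi}\|w_1-w_2^\phi\|_\Box$. With $[x]_+=\max(x,0)$, $\Gamma(w,A)=\iint_{y<z}\big[\int_{A\cap[0,y]}(w(x,z)-w(x,y))dx\big]_+dy\,dz+\iint_{y<z}\big[\int_{A\cap[z,1]}(w(x,y)-w(x,z))dx\big]_+dy\,dz$ for measurable $A\subseteq[0,1]$, $\Gamma(w)=\sup_A\Gamma(w,A)$, and $\tilde\Gamma(w)=\inf_{\phi\in\Phi}\Gamma(w^\phi)$. *)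

theory Defs
  imports "HOL-Analysis.Analysis"
begin

definition I01 :: "real measure" where
  "I01 = restrict_space lborel {0..1}"

definition W0 :: "(real \<Rightarrow> real \<Rightarrow> real) set" where
  "W0 = {w. (\<lambda>(x,y). w x y) \<in> borel_measurable (I01 \<Otimes>\<^sub>M I01)
            \<and> (\<forall>x\<in>{0..1}. \<forall>y\<in>{0..1}. w x y = w y x \<and> 0 \<le> w x y \<and> w x y \<le> 1)}"

definition meas_pres :: "(real \<Rightarrow> real) \<Rightarrow> bool" where
  "meas_pres f \<longleftrightarrow> f \<in> measurable I01 I01 \<and>
     (\<forall>B\<in>sets I01. emeasure I01 (f -` B \<inter> space I01) = emeasure I01 B)"

definition Phi :: "(real \<Rightarrow> real) set" where
  "Phi = {\<phi>. bij_betw \<phi> {0..1} {0..1} \<and> meas_pres \<phi> \<and> meas_pres (the_inv_into {0..1} \<phi>)}"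

definition relabel :: "(real \<Rightarrow> real \<Rightarrow> real) \<Rightarrow> (real \<Rightarrow> real) \<Rightarrow> real \<Rightarrow> real \<Rightarrow> real" where
  "relabel w \<phi> = (\<lambda>x y. w (\<phi> x) (\<phi> y))"

definition cut_norm :: "(real \<Rightarrow> real \<Rightarrow> real) \<Rightarrow> real" where
  "cut_norm w = Sup {\<bar>LINT p|(I01 \<Otimes>\<^sub>M I01). indicator (S \<times> T) p * w (fst p) (snd p)\<bar>
                     | S T. S \<in> sets I01 \<and> T \<in> sets I01}"

definition cut_dist :: "(real \<Rightarrow> real \<Rightarrow> real) \<Rightarrow> (real \<Rightarrow> real \<Rightarrow> real) \<Rightarrow> real" where
  "cut_dist w1 w2 = Inf {cut_norm (\<lambda>x y. w1 x y - relabel w2 \<phi> x y) | \<phi>. \<phi> \<in> Phi}"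

definition Gamma_A :: "(real \<Rightarrow> real \<Rightarrow> real) \<Rightarrow> real set \<Rightarrow> real" where
  "Gamma_A w A =
     (LINT p|(I01 \<Otimes>\<^sub>M I01). indicator {(y,z). y < z} p *
        max 0 (LINT x|I01. indicator (A \<inter> {0..fst p}) x * (w x (snd p) - w x (fst p))))
   + (LINT p|(I01 \<Otimes>\<^sub>M I01). indicator {(y,z). y < z} p *
        max 0 (LINT x|I01. indicator (A \<inter> {snd p..1}) x * (w x (fst p) - w x (snd p))))"

definition Gamma :: "(real \<Rightarrow> real \<Rightarrow> real) \<Rightarrow> real" where
  "Gamma w = Sup {Gamma_A w A | A. A \<in> sets I01}"

definition Gamma_tilde :: "(real \<Rightarrow> real \<Rightarrow> real) \<Rightarrow> real" where
  "Gamma_tilde w = Inf {Gamma (relabel w \<phi>) | \<phi>. \<phi> \<in> Phi}"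

end

theory Submission
  imports Defs
begin

(* The theorem follows from a quantitative stability estimate for Gamma: for kernels a, b
   with values in [-1,1] and every grid size m > 0,
     Gamma a <= Gamma b + (4 + 4m) * ||a - b||_cut + 4/m                    (Gamma_stable).
   Gamma_A splits into two halves, each the integral of the positive part of a difference
   of row integrals  row w S z = int_S w(x,z) dx  at the columns z and y, where the set S
   (A n [0,y] or A n [y,1]) depends on y.  Replacing a by b changes a half by at most
   int |row d S z| + int |row d S y| with d = a - b.  The first term is at most
   2 ||d||_cut (row_abs_integral_le_cut_norm).  For the second, [0,1] is cut into m cells;
   off the cell of y the set S agrees with A on every cell, which gives the bound
   2m ||d||_cut + 2/m (row_abs_integral_staircase).
   Measure preserving relabellings form a group and do not increase the cut norm, so the
   estimate passes to Gamma_tilde with the cut distance in place of the cut norm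
   (Gamma_tilde_dist_bound).  Choosing m large and then n large gives the theorem. *)

lemma space_I01 [simp]: "space I01 = {0..1}"
  by (simp add: I01_def)

lemma sets_I01: "sets I01 = sets (restrict_space borel {0..1::real})"
  unfolding I01_def by (simp add: sets_restrict_space)

lemma emeasure_I01: "A \<in> sets I01 \<Longrightarrow> emeasure I01 A = emeasure lborel A"
  unfolding I01_def by (simp add: emeasure_restrict_space sets_restrict_space_iff)

lemma finite_measure_I01: "finite_measure I01"
  unfolding I01_def by (intro finite_measureI) (simp add: emeasure_restrict_space)

interpretation I01: finite_measure I01 by (rule finite_measure_I01)
interpretation I01P: pair_sigma_finite I01 I01 by unfold_locales

lemma measure_I01_space: "measure I01 {0..1} = 1"
  unfolding I01_def by (simp add: measure_restrict_space)

lemma ident_measurable_I01 [measurable]: "(\<lambda>x. x) \<in> borel_measurable I01"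
  unfolding I01_def by (simp add: measurable_restrict_space1)

definition I01sq :: "(real \<times> real) measure" where
  "I01sq = I01 \<Otimes>\<^sub>M I01"

lemma space_I01sq [simp]: "space I01sq = {0..1} \<times> {0..1}"
  by (simp add: I01sq_def space_pair_measure)

interpretation I01sq: finite_measure I01sq
  unfolding I01sq_def by (rule finite_measure_pair_measure) (fact finite_measure_I01)+

lemma measure_I01sq_space: "measure I01sq ({0..1} \<times> {0..1}) = 1"
proof -
  have "emeasure I01 {0..1} = 1" unfolding I01_def by (simp add: emeasure_restrict_space)
  then have "emeasure I01sq ({0..1} \<times> {0..1}) = 1"
    unfolding I01sq_def using I01.emeasure_pair_measure_Times[of "{0..1}" I01 "{0..1}"]
    by (metis mult_1 sets.top space_I01)
  then show ?thesis by (simp add: measure_def)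
qed

lemma fst_snd_measurable_I01sq: "fst \<in> measurable I01sq I01" "snd \<in> measurable I01sq I01"
  unfolding I01sq_def by measurable

definition kernel_meas :: "(real \<Rightarrow> real \<Rightarrow> real) \<Rightarrow> bool" where
  "kernel_meas f \<longleftrightarrow> (\<lambda>p. f (fst p) (snd p)) \<in> borel_measurable I01sq"

definition kernel_bounded :: "(real \<Rightarrow> real \<Rightarrow> real) \<Rightarrow> real \<Rightarrow> bool" where
  "kernel_bounded f B \<longleftrightarrow> (\<forall>x\<in>{0..1}. \<forall>y\<in>{0..1}. \<bar>f x y\<bar> \<le> B)"

lemma kernel_bounded_nonneg: "kernel_bounded f B \<Longrightarrow> 0 \<le> B"
  unfolding kernel_bounded_def by (meson abs_ge_zero atLeastAtMost_iff order.trans order_refl zero_le_one)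

lemma W0_kernel: "w \<in> W0 \<Longrightarrow> kernel_meas w \<and> kernel_bounded w 1"
  unfolding W0_def kernel_meas_def kernel_bounded_def I01sq_def by (auto simp: split_beta')

lemma kernel_diff:
  assumes "kernel_meas a" "kernel_meas b" "kernel_bounded a 1" "kernel_bounded b 1"
  shows "kernel_meas (\<lambda>x y. a x y - b x y)" "kernel_bounded (\<lambda>x y. a x y - b x y) 2"
proof -
  show "kernel_meas (\<lambda>x y. a x y - b x y)" using assms(1,2) unfolding kernel_meas_def by simp
  show "kernel_bounded (\<lambda>x y. a x y - b x y) 2"
    using assms(3,4) unfolding kernel_bounded_def by (smt (verit))
qed

lemma kernel_meas_comp:
  assumes "kernel_meas d" "f \<in> measurable N I01" "g \<in> measurable N I01"
  shows "(\<lambda>t. d (f t) (g t)) \<in> borel_measurable N"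
proof -
  have "(\<lambda>t. (f t, g t)) \<in> measurable N I01sq" unfolding I01sq_def using assms by measurable
  from measurable_compose[OF this assms(1)[unfolded kernel_meas_def]] show ?thesis by simp
qed

lemma kernel_meas_column:
  assumes "kernel_meas d" "y \<in> {0..1}"
  shows "(\<lambda>x. d x y) \<in> borel_measurable I01"
  using kernel_meas_comp[OF assms(1) measurable_ident_sets[OF refl], of "\<lambda>_. y"] assms(2)
  by simp

lemma indicator_comp_measurable:
  "A \<in> sets I01 \<Longrightarrow> g \<in> measurable N I01 \<Longrightarrow> (\<lambda>t. indicator A (g t) :: real) \<in> borel_measurable N"
  using measurable_compose[of g N I01 "indicator A"] borel_measurable_indicator by auto

lemma indicator_interval_measurable:
  assumes "f \<in> measurable N I01" "g \<in> measurable N I01"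
  shows "(\<lambda>t. indicator {0..f t} (g t) :: real) \<in> borel_measurable N"
        "(\<lambda>t. indicator {f t..1} (g t) :: real) \<in> borel_measurable N"
proof -
  have [measurable]: "f \<in> borel_measurable N" "g \<in> borel_measurable N"
    using measurable_compose[OF assms(1) ident_measurable_I01]
      measurable_compose[OF assms(2) ident_measurable_I01] by auto
  have "(\<lambda>t. indicator {0..f t} (g t) :: real) = (\<lambda>t. if 0 \<le> g t \<and> g t \<le> f t then 1 else 0)"
    by (auto simp: indicator_def)
  also have "\<dots> \<in> borel_measurable N" by measurable
  finally show "(\<lambda>t. indicator {0..f t} (g t) :: real) \<in> borel_measurable N" .
  have "(\<lambda>t. indicator {f t..1} (g t) :: real) = (\<lambda>t. if f t \<le> g t \<and> g t \<le> 1 then 1 else 0)"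
    by (auto simp: indicator_def)
  also have "\<dots> \<in> borel_measurable N" by measurable
  finally show "(\<lambda>t. indicator {f t..1} (g t) :: real) \<in> borel_measurable N" .
qed

lemma integrable_I01_bounded:
  "f \<in> borel_measurable I01 \<Longrightarrow> (\<And>x. x \<in> {0..1} \<Longrightarrow> \<bar>f x\<bar> \<le> (B::real)) \<Longrightarrow> integrable I01 f"
  by (rule I01.integrable_const_bound[where B=B]) auto

lemma integrable_I01sq_bounded:
  "f \<in> borel_measurable I01sq \<Longrightarrow> (\<And>x y. x \<in> {0..1} \<Longrightarrow> y \<in> {0..1} \<Longrightarrow> \<bar>f (x,y)\<bar> \<le> (B::real))
    \<Longrightarrow> integrable I01sq f"
  by (rule I01sq.integrable_const_bound[where B=B]) auto

text \<open>On a space of total mass one, a pointwise bound bounds the integral; no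
  integrability assumption is needed since a non-integrable function integrates to 0.\<close>
lemma integral_I01_abs_le:
  assumes "\<And>x. x \<in> {0..1} \<Longrightarrow> \<bar>f x\<bar> \<le> (B::real)"
  shows "\<bar>LINT x|I01. f x\<bar> \<le> B"
proof (cases "integrable I01 f")
  case True
  have "\<bar>LINT x|I01. f x\<bar> \<le> (LINT x|I01. \<bar>f x\<bar>)" by (rule integral_abs_bound)
  also have "\<dots> \<le> (LINT x|I01. B)" using True assms by (intro integral_mono) auto
  also have "\<dots> = B" using measure_I01_space by simp
  finally show ?thesis .
next
  case False then show ?thesis using assms[of 0] by (simp add: not_integrable_integral_eq)
qed

lemma integral_I01_le:
  assumes "\<And>x. x \<in> {0..1} \<Longrightarrow> f x \<le> (C::real)" "0 \<le> C"
  shows "(LINT x|I01. f x) \<le> C"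
proof (cases "integrable I01 f")
  case True
  have "(LINT x|I01. f x) \<le> (LINT x|I01. C)" using True assms by (intro integral_mono) auto
  also have "\<dots> = C" using measure_I01_space by simp
  finally show ?thesis .
qed (simp add: not_integrable_integral_eq assms)

lemma integral_I01sq_abs_le:
  assumes "\<And>x y. x \<in> {0..1} \<Longrightarrow> y \<in> {0..1} \<Longrightarrow> \<bar>f (x,y)\<bar> \<le> (B::real)"
  shows "\<bar>LINT p|I01sq. f p\<bar> \<le> B"
proof (cases "integrable I01sq f")
  case True
  have "\<bar>LINT x|I01sq. f x\<bar> \<le> (LINT x|I01sq. \<bar>f x\<bar>)" by (rule integral_abs_bound)
  also have "\<dots> \<le> (LINT x|I01sq. B)" using True assms by (intro integral_mono) auto
  also have "\<dots> = B" using measure_I01sq_space by simp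
  finally show ?thesis .
next
  case False then show ?thesis using assms[of 0 0] by (simp add: not_integrable_integral_eq)
qed

section \<open>Cut norm and row integrals\<close>

lemma rectangle_integral_le_cut_norm:
  assumes "kernel_bounded d B" "S \<in> sets I01" "T \<in> sets I01"
  shows "\<bar>LINT p|I01sq. indicator (S \<times> T) p * d (fst p) (snd p)\<bar> \<le> cut_norm d"
  unfolding cut_norm_def I01sq_def[symmetric]
proof (rule cSup_upper)
  have B0: "0 \<le> B" using assms(1) by (rule kernel_bounded_nonneg)
  show "bdd_above {\<bar>LINT p|I01sq. indicator (S \<times> T) p * d (fst p) (snd p)\<bar>
                   |S T. S \<in> sets I01 \<and> T \<in> sets I01}"
    by (rule bdd_aboveI[where M=B], safe, rule integral_I01sq_abs_le)
       (use assms(1) B0 in \<open>auto simp: kernel_bounded_def indicator_def\<close>)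
qed (use assms in auto)

lemma cut_norm_nonneg: "kernel_bounded d B \<Longrightarrow> 0 \<le> cut_norm d"
  using rectangle_integral_le_cut_norm[of d B "{}" "{}"] by simp

lemma cut_norm_cong:
  assumes "\<And>x y. x \<in> {0..1} \<Longrightarrow> y \<in> {0..1} \<Longrightarrow> f x y = g x y"
  shows "cut_norm f = cut_norm g"
proof -
  have "(LINT p|(I01 \<Otimes>\<^sub>M I01). indicator (S \<times> T) p * f (fst p) (snd p)) =
        (LINT p|(I01 \<Otimes>\<^sub>M I01). indicator (S \<times> T) p * g (fst p) (snd p))" for S T
    by (rule Bochner_Integration.integral_cong) (use assms in \<open>auto simp: space_pair_measure\<close>)
  then show ?thesis unfolding cut_norm_def by simp
qed

lemma cut_norm_uminus: "cut_norm (\<lambda>x y. - f x y) = cut_norm f"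
  unfolding cut_norm_def by simp

definition row :: "(real \<Rightarrow> real \<Rightarrow> real) \<Rightarrow> real set \<Rightarrow> real \<Rightarrow> real" where
  "row d S z = (LINT x|I01. indicator S x * d x z)"

lemma row_integrable:
  assumes "kernel_meas d" "kernel_bounded d B" "S \<in> sets I01" "z \<in> {0..1}"
  shows "integrable I01 (\<lambda>x. indicator S x * d x z)"
  using kernel_meas_column[OF assms(1,4)] assms(2-4) kernel_bounded_nonneg[OF assms(2)]
  by (intro integrable_I01_bounded[where B=B]) (auto simp: kernel_bounded_def indicator_def)

lemma row_abs_le: "kernel_bounded d B \<Longrightarrow> z \<in> {0..1} \<Longrightarrow> \<bar>row d S z\<bar> \<le> B"
  unfolding row_def using kernel_bounded_nonneg[of d B]
  by (intro integral_I01_abs_le) (auto simp: kernel_bounded_def indicator_def)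

lemma row_abs_le_measure:
  assumes "kernel_meas d" "kernel_bounded d B" "S \<in> sets I01" "z \<in> {0..1}"
  shows "\<bar>row d S z\<bar> \<le> B * measure I01 S"
proof -
  have B0: "0 \<le> B" using assms(2) by (rule kernel_bounded_nonneg)
  have "\<bar>row d S z\<bar> \<le> (LINT x|I01. \<bar>indicator S x * d x z\<bar>)"
    unfolding row_def by (rule integral_abs_bound)
  also have "\<dots> \<le> (LINT x|I01. indicator S x * B)"
    using row_integrable[OF assms] assms B0
    by (intro integral_mono integrable_I01_bounded[where B=B])
       (auto simp: kernel_bounded_def indicator_def)
  also have "\<dots> = B * measure I01 S"
    using assms(3) I01.emeasure_finite[of S] sets.sets_into_space[OF assms(3)]
    by (simp add: mult.commute Int_absorb2)
  finally show ?thesis .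
qed

lemma row_diff_kernel:
  assumes "kernel_meas a" "kernel_meas b" "kernel_bounded a Ba" "kernel_bounded b Bb"
    "S \<in> sets I01" "z \<in> {0..1}"
  shows "row (\<lambda>x y. a x y - b x y) S z = row a S z - row b S z"
  unfolding row_def
  using Bochner_Integration.integral_diff[OF row_integrable[OF assms(1,3,5,6)] row_integrable[OF assms(2,4,5,6)]]
  by (simp add: right_diff_distrib)

lemma row_diff_columns:
  assumes "kernel_meas w" "kernel_bounded w B" "S \<in> sets I01" "u \<in> {0..1}" "v \<in> {0..1}"
  shows "(LINT x|I01. indicator S x * (w x u - w x v)) = row w S u - row w S v"
  unfolding row_def
  using Bochner_Integration.integral_diff[OF row_integrable[OF assms(1-4)] row_integrable[OF assms(1-3,5)]]
  by (simp add: right_diff_distrib)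

lemma row_measurable:
  fixes Bs :: "real \<Rightarrow> real set" and N :: "'a measure"
  assumes hB: "(\<lambda>p. indicator (Bs (fst p)) (snd p) :: real) \<in> borel_measurable I01sq"
    and u: "u \<in> measurable N I01"
    and e: "(\<lambda>q. e (fst q) (snd q) :: real) \<in> borel_measurable (N \<Otimes>\<^sub>M I01)"
  shows "(\<lambda>p. LINT x|I01. indicator (Bs (u p)) x * e p x) \<in> borel_measurable N"
proof -
  have "(\<lambda>q. (u (fst q), snd q)) \<in> measurable (N \<Otimes>\<^sub>M I01) I01sq"
    unfolding I01sq_def using u by measurable
  from measurable_compose[OF this hB]
  have "(\<lambda>q. indicator (Bs (u (fst q))) (snd q) * e (fst q) (snd q) :: real) \<in> borel_measurable (N \<Otimes>\<^sub>M I01)"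
    using e by simp
  then show ?thesis
    using I01.borel_measurable_lebesgue_integral[of "\<lambda>p x. indicator (Bs (u p)) x * e p x" N]
    by (simp add: split_beta')
qed

lemma row_measurable_column:
  assumes "kernel_meas d" "S \<in> sets I01"
  shows "row d S \<in> borel_measurable I01"
proof -
  have m: "snd \<in> measurable (I01 \<Otimes>\<^sub>M I01) I01" "fst \<in> measurable (I01 \<Otimes>\<^sub>M I01) I01" by measurable
  have "(\<lambda>p. indicator S (snd p) * d (snd p) (fst p) :: real) \<in> borel_measurable (I01 \<Otimes>\<^sub>M I01)"
    using indicator_comp_measurable[OF assms(2) m(1)] kernel_meas_comp[OF assms(1) m(1) m(2)] by simp
  then show ?thesis unfolding row_def
    using I01.borel_measurable_lebesgue_integral[of "\<lambda>z x. indicator S x * d x z" I01]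
    by (simp add: split_beta')
qed

lemma integral_row_rectangle:
  assumes d: "kernel_meas d" "kernel_bounded d B" and S: "S \<in> sets I01" and T: "T \<in> sets I01"
  shows "(LINT z|I01. indicator T z * row d S z) = (LINT p|I01sq. indicator (S \<times> T) p * d (fst p) (snd p))"
proof -
  have B0: "0 \<le> B" using d(2) by (rule kernel_bounded_nonneg)
  have m: "snd \<in> measurable (I01 \<Otimes>\<^sub>M I01) I01" "fst \<in> measurable (I01 \<Otimes>\<^sub>M I01) I01" by measurable
  have "(LINT z|I01. indicator T z * row d S z) = (LINT z|I01. LINT x|I01. indicator S x * indicator T z * d x z)"
    unfolding row_def
    by (intro Bochner_Integration.integral_cong refl, subst integral_mult_right_zero[symmetric])
       (auto intro!: Bochner_Integration.integral_cong simp: mult_ac)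
  also have "\<dots> = integral\<^sup>L (I01 \<Otimes>\<^sub>M I01) (\<lambda>(x,z). indicator S x * indicator T z * d x z)"
  proof (rule I01P.integral_snd)
    show "integrable (I01 \<Otimes>\<^sub>M I01) (\<lambda>(x,z). indicator S x * indicator T z * d x z)"
      unfolding I01sq_def[symmetric]
      by (rule integrable_I01sq_bounded[where B=B])
         (use indicator_comp_measurable[OF S m(2)] indicator_comp_measurable[OF T m(1)]
            kernel_meas_comp[OF d(1) m(2) m(1)] d(2) B0
          in \<open>auto simp: I01sq_def split_beta' kernel_bounded_def indicator_def\<close>)
  qed
  also have "\<dots> = (LINT p|I01sq. indicator (S \<times> T) p * d (fst p) (snd p))"
    unfolding I01sq_def by (intro Bochner_Integration.integral_cong) (auto simp: indicator_def)
  finally show ?thesis .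
qed

text \<open>Splitting the columns by the sign of the row integral: the L1 norm of a row
  integral is at most twice the cut norm.\<close>
lemma row_abs_integral_le_cut_norm:
  assumes d: "kernel_meas d" "kernel_bounded d B" and S: "S \<in> sets I01"
  shows "(LINT z|I01. \<bar>row d S z\<bar>) \<le> 2 * cut_norm d"
proof -
  have B0: "0 \<le> B" using d(2) by (rule kernel_bounded_nonneg)
  note g_meas [measurable] = row_measurable_column[OF d(1) S]
  define T where "T = {z\<in>space I01. 0 \<le> row d S z}"
  define T' where "T' = {z\<in>space I01. row d S z < 0}"
  have T: "T \<in> sets I01" and T': "T' \<in> sets I01" unfolding T_def T'_def by measurable
  have intg: "integrable I01 (\<lambda>z. indicator U z * row d S z)" if "U \<in> sets I01" for U
    using that row_abs_le[OF d(2)] B0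
    by (intro integrable_I01_bounded[where B=B]) (auto simp: indicator_def)
  have "(LINT z|I01. \<bar>row d S z\<bar>) = (LINT z|I01. indicator T z * row d S z - indicator T' z * row d S z)"
    by (intro Bochner_Integration.integral_cong) (auto simp: T_def T'_def indicator_def)
  also have "\<dots> = (LINT z|I01. indicator T z * row d S z) - (LINT z|I01. indicator T' z * row d S z)"
    using intg[OF T] intg[OF T'] by (rule Bochner_Integration.integral_diff)
  also have "\<dots> \<le> 2 * cut_norm d"
    using rectangle_integral_le_cut_norm[OF d(2) S T] rectangle_integral_le_cut_norm[OF d(2) S T']
    unfolding integral_row_rectangle[OF d S T] integral_row_rectangle[OF d S T'] by linarith
  finally show ?thesis .
qed

section \<open>A grid of m cells\<close>

definition cell :: "nat \<Rightarrow> real \<Rightarrow> nat" where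
  "cell m x = min (nat \<lfloor>real m * x\<rfloor>) (m - 1)"

definition cell_set :: "nat \<Rightarrow> nat \<Rightarrow> real set" where
  "cell_set m k = {x\<in>{0..1}. cell m x = k}"

lemma cell_lt: "0 < m \<Longrightarrow> cell m x < m"
  unfolding cell_def by auto

lemma cell_measurable: "cell m \<in> measurable I01 (count_space UNIV)"
proof -
  have "(\<lambda>x::real. real m * x) \<in> borel_measurable I01" by measurable
  then have "(\<lambda>x. \<lfloor>real m * x\<rfloor>) \<in> measurable I01 (count_space UNIV)"
    using measurable_compose measurable_real_floor by blast
  then show ?thesis unfolding cell_def
    using measurable_compose[of _ I01 "count_space UNIV" "\<lambda>i. min (nat i) (m - 1)" "count_space UNIV"]
    by (simp add: o_def)
qed

lemma cell_set_sets: "cell_set m k \<in> sets I01"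
proof -
  have "cell m -` {k} \<inter> space I01 \<in> sets I01"
    using measurable_sets[OF cell_measurable, of "{k}"] by simp
  moreover have "cell m -` {k} \<inter> space I01 = cell_set m k" by (auto simp: cell_set_def)
  ultimately show ?thesis by simp
qed

lemma cell_less_imp_less:
  assumes "0 < m" "x \<in> {0..1}" "y \<in> {0..1}" "cell m x < cell m y"
  shows "x < y"
proof -
  have "cell m x = nat \<lfloor>real m * x\<rfloor>" using assms(4) unfolding cell_def by auto
  moreover have "cell m y \<le> nat \<lfloor>real m * y\<rfloor>" unfolding cell_def by auto
  ultimately have "\<lfloor>real m * x\<rfloor> < \<lfloor>real m * y\<rfloor>" using assms(4) by linarith
  then have "real m * x < real m * y" by (meson floor_mono not_less)
  then show ?thesis using assms(1) by simp
qed

lemma cell_set_subset: assumes "0 < m" shows "cell_set m k \<subseteq> {real k / m .. (real k + 1) / m}"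
proof
  fix x assume "x \<in> cell_set m k"
  then have x01: "0 \<le> x" "x \<le> 1" and kx: "cell m x = k" by (auto simp: cell_set_def)
  have "k \<le> nat \<lfloor>real m * x\<rfloor>" using kx unfolding cell_def by linarith
  moreover have "0 \<le> real m * x" using x01 by simp
  ultimately have "real k \<le> real m * x" by linarith
  moreover have "real m * x \<le> real k + 1"
  proof (cases "nat \<lfloor>real m * x\<rfloor> \<le> m - 1")
    case True
    then show ?thesis using kx x01 unfolding cell_def by linarith
  next
    case False
    then have "k = m - 1" using kx unfolding cell_def by simp
    moreover have "real m * x \<le> real m" using x01 by (simp add: mult_left_le)
    ultimately show ?thesis using assms by (simp add: of_nat_diff)
  qed
  ultimately show "x \<in> {real k / m .. (real k + 1) / m}"
    using assms by (auto simp: field_simps)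
qed

lemma measure_cell_set: assumes "0 < m" shows "measure I01 (cell_set m k) \<le> 1 / m"
proof -
  have "measure I01 (cell_set m k) = measure lborel (cell_set m k)"
    using cell_set_sets[of m k] emeasure_I01[of "cell_set m k"] by (simp add: measure_def)
  also have "\<dots> \<le> measure lborel {real k / m .. (real k + 1) / m}"
    using cell_set_subset[OF assms] cell_set_sets[of m k]
    by (intro measure_mono_fmeasurable)
       (auto simp: sets_I01 sets_restrict_space_iff fmeasurable_def emeasure_lborel_Icc_eq)
  also have "\<dots> = 1 / m" using assms by (simp add: field_simps)
  finally show ?thesis .
qed

lemma row_sum_cells:
  assumes d: "kernel_meas d" "kernel_bounded d B" and S: "S \<in> sets I01"
    and z: "z \<in> {0..1}" and m: "0 < m"
  shows "row d S z = (\<Sum>k<m. row d (S \<inter> cell_set m k) z)"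
proof -
  have cells: "(\<Sum>k<m. indicator (cell_set m k) x :: real) = 1" if "x \<in> {0..1}" for x
  proof -
    have "(\<Sum>k<m. indicator (cell_set m k) x :: real) = (\<Sum>k<m. if k = cell m x then 1 else 0)"
      using that by (intro sum.cong) (auto simp: cell_set_def indicator_def)
    then show ?thesis using cell_lt[OF m] by simp
  qed
  have "row d S z = (LINT x|I01. (\<Sum>k<m. indicator (S \<inter> cell_set m k) x * d x z))"
    unfolding row_def
    by (intro Bochner_Integration.integral_cong refl)
       (simp add: cells indicator_inter_arith sum_distrib_left[symmetric] mult_ac)
  also have "\<dots> = (\<Sum>k<m. row d (S \<inter> cell_set m k) z)"
    unfolding row_def using S cell_set_sets
    by (intro Bochner_Integration.integral_sum row_integrable[OF d _ z]) auto
  finally show ?thesis .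
qed

definition staircase :: "nat \<Rightarrow> real set \<Rightarrow> bool \<Rightarrow> (real \<Rightarrow> real set) \<Rightarrow> bool" where
  "staircase m A c Bs \<longleftrightarrow> (\<forall>x\<in>{0..1}. \<forall>y\<in>{0..1}. cell m x \<noteq> cell m y \<longrightarrow>
     (x \<in> Bs y \<longleftrightarrow> x \<in> A \<and> (cell m x < cell m y \<longleftrightarrow> c)))"

lemma staircase_cell_set:
  assumes "staircase m A c Bs" "y \<in> {0..1}" "k \<noteq> cell m y"
  shows "Bs y \<inter> cell_set m k = (if k < cell m y \<longleftrightarrow> c then A \<inter> cell_set m k else {})"
  using assms unfolding staircase_def cell_set_def by auto

lemma staircase_lower: "0 < m \<Longrightarrow> staircase m A True (\<lambda>y. A \<inter> {0..y})"
  unfolding staircase_def using cell_less_imp_less by (metis atLeastAtMost_iff Int_iff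
    linorder_neqE_nat not_less_iff_gr_or_eq order_le_less)

lemma staircase_upper: "0 < m \<Longrightarrow> staircase m A False (\<lambda>y. A \<inter> {y..1})"
  unfolding staircase_def using cell_less_imp_less by (metis atLeastAtMost_iff Int_iff
    linorder_neqE_nat not_less_iff_gr_or_eq order_le_less)

text \<open>Pointwise: only the cell of y is not a row integral over a fixed set.\<close>
lemma row_staircase_pointwise:
  assumes d: "kernel_meas d" "kernel_bounded d B" and A: "A \<in> sets I01" and m: "0 < m"
    and st: "staircase m A c Bs" and y: "y \<in> {0..1}" and By: "Bs y \<in> sets I01"
  shows "\<bar>row d (Bs y) y\<bar> \<le> (\<Sum>k<m. \<bar>row d (A \<inter> cell_set m k) y\<bar>) + B / m"
proof -
  have B0: "0 \<le> B" using d(2) by (rule kernel_bounded_nonneg)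
  have cell_term: "\<bar>row d (Bs y \<inter> cell_set m k) y\<bar> \<le> \<bar>row d (A \<inter> cell_set m k) y\<bar> + (if k = cell m y then B / m else 0)" for k
  proof (cases "k = cell m y")
    case True
    have "\<bar>row d (Bs y \<inter> cell_set m k) y\<bar> \<le> B * measure I01 (Bs y \<inter> cell_set m k)"
      using By cell_set_sets by (intro row_abs_le_measure[OF d _ y]) auto
    also have "\<dots> \<le> B * (1 / m)"
      using measure_cell_set[OF m, of k] I01.finite_measure_mono[of "Bs y \<inter> cell_set m k" "cell_set m k"]
        cell_set_sets B0 by (intro mult_left_mono) auto
    finally show ?thesis using True by simp
  next
    case False
    then show ?thesis
      using staircase_cell_set[OF st y False] by (simp add: row_def)
  qed
  have "\<bar>row d (Bs y) y\<bar> \<le> (\<Sum>k<m. \<bar>row d (Bs y \<inter> cell_set m k) y\<bar>)"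
    unfolding row_sum_cells[OF d By y m] by (rule sum_abs)
  also have "\<dots> \<le> (\<Sum>k<m. \<bar>row d (A \<inter> cell_set m k) y\<bar> + (if k = cell m y then B / m else 0))"
    by (rule sum_mono) (rule cell_term)
  also have "\<dots> = (\<Sum>k<m. \<bar>row d (A \<inter> cell_set m k) y\<bar>) + B / m"
    using cell_lt[OF m, of y] by (simp add: sum.distrib)
  finally show ?thesis .
qed

text \<open>Integrating over y: each of the m cells contributes at most twice the cut norm.\<close>
lemma row_abs_integral_staircase:
  assumes d: "kernel_meas d" "kernel_bounded d B" and A: "A \<in> sets I01" and m: "0 < m"
    and st: "staircase m A c Bs" and Bs: "\<And>y. y \<in> {0..1} \<Longrightarrow> Bs y \<in> sets I01"
  shows "(LINT y|I01. \<bar>row d (Bs y) y\<bar>) \<le> 2 * real m * cut_norm d + B / m"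
proof -
  have B0: "0 \<le> B" using d(2) by (rule kernel_bounded_nonneg)
  have AC: "A \<inter> cell_set m k \<in> sets I01" for k using A cell_set_sets by auto
  have ig: "integrable I01 (\<lambda>y. \<bar>row d (A \<inter> cell_set m k) y\<bar>)" for k
    using row_measurable_column[OF d(1) AC] row_abs_le[OF d(2)]
    by (intro integrable_I01_bounded[where B=B]) auto
  have "(LINT y|I01. \<bar>row d (Bs y) y\<bar>) \<le> (LINT y|I01. (\<Sum>k<m. \<bar>row d (A \<inter> cell_set m k) y\<bar>) + B / m)"
    by (rule integral_mono')
       (use ig row_staircase_pointwise[OF d A m st _ Bs] B0
         in \<open>auto intro!: Bochner_Integration.integrable_add add_nonneg_nonneg sum_nonneg\<close>)
  also have "\<dots> = (\<Sum>k<m. LINT y|I01. \<bar>row d (A \<inter> cell_set m k) y\<bar>) + B / m"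
    using ig measure_I01_space
    by (subst Bochner_Integration.integral_add) (auto simp: Bochner_Integration.integral_sum)
  also have "\<dots> \<le> (\<Sum>k<m. 2 * cut_norm d) + B / m"
    by (intro add_right_mono sum_mono row_abs_integral_le_cut_norm[OF d AC])
  also have "\<dots> = 2 * real m * cut_norm d + B / m" by simp
  finally show ?thesis .
qed

section \<open>Stability of Gamma under the cut norm\<close>

definition half_Gamma :: "(real \<Rightarrow> real \<Rightarrow> real) \<Rightarrow> (real \<times> real) set \<Rightarrow> (real \<Rightarrow> real set) \<Rightarrow> real" where
  "half_Gamma w R Bs = (LINT p|I01sq. indicator R p *
     max 0 (LINT x|I01. indicator (Bs (fst p)) x * (w x (snd p) - w x (fst p))))"

definition sets_measurable :: "(real \<Rightarrow> real set) \<Rightarrow> bool" where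
  "sets_measurable Bs \<longleftrightarrow> (\<lambda>p. indicator (Bs (fst p)) (snd p) :: real) \<in> borel_measurable I01sq"

lemma row_param_measurable:
  assumes "sets_measurable Bs" "kernel_meas d" "f \<in> measurable I01sq I01"
  shows "(\<lambda>p. row d (Bs (fst p)) (f p)) \<in> borel_measurable I01sq"
  unfolding row_def
proof (rule row_measurable[OF assms(1)[unfolded sets_measurable_def] fst_snd_measurable_I01sq(1)])
  have "(\<lambda>q. snd q) \<in> measurable (I01sq \<Otimes>\<^sub>M I01) I01" "(\<lambda>q. f (fst q)) \<in> measurable (I01sq \<Otimes>\<^sub>M I01) I01"
    using assms(3) by measurable
  from kernel_meas_comp[OF assms(2) this] show "(\<lambda>q. d (snd q) (f (fst q))) \<in> borel_measurable (I01sq \<Otimes>\<^sub>M I01)" .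
qed

lemma half_Gamma_integrand_measurable:
  assumes "sets_measurable Bs" "kernel_meas w" "(\<lambda>p. indicator R p :: real) \<in> borel_measurable I01sq"
  shows "(\<lambda>p. indicator R p * max 0 (LINT x|I01. indicator (Bs (fst p)) x * (w x (snd p) - w x (fst p))))
           \<in> borel_measurable I01sq"
proof -
  have "(\<lambda>q. snd q) \<in> measurable (I01sq \<Otimes>\<^sub>M I01) I01"
     "(\<lambda>q. fst (fst q)) \<in> measurable (I01sq \<Otimes>\<^sub>M I01) I01" "(\<lambda>q. snd (fst q)) \<in> measurable (I01sq \<Otimes>\<^sub>M I01) I01"
    unfolding I01sq_def by measurable
  note cols = kernel_meas_comp[OF assms(2) this(1) this(3)] kernel_meas_comp[OF assms(2) this(1) this(2)]
  have "(\<lambda>p. LINT x|I01. indicator (Bs (fst p)) x * (w x (snd p) - w x (fst p))) \<in> borel_measurable I01sq"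
    using cols
    by (intro row_measurable[OF assms(1)[unfolded sets_measurable_def] fst_snd_measurable_I01sq(1)]) simp
  then show ?thesis using assms(3) by simp
qed

lemma half_Gamma_rows:
  assumes "kernel_meas w" "kernel_bounded w 1" "\<And>y. y \<in> {0..1} \<Longrightarrow> Bs y \<in> sets I01"
  shows "half_Gamma w R Bs =
    (LINT p|I01sq. indicator R p * max 0 (row w (Bs (fst p)) (snd p) - row w (Bs (fst p)) (fst p)))"
  unfolding half_Gamma_def
  by (intro Bochner_Integration.integral_cong refl)
     (auto simp: row_diff_columns[OF assms(1,2)] assms(3) mem_Times_iff)

lemma row_param_integrable:
  assumes "sets_measurable Bs" "kernel_meas d" "kernel_bounded d B" "f \<in> measurable I01sq I01"
  shows "integrable I01sq (\<lambda>p. \<bar>row d (Bs (fst p)) (f p)\<bar>)"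
  using row_param_measurable[OF assms(1,2,4)] row_abs_le[OF assms(3)] measurable_space[OF assms(4)]
  by (intro integrable_I01sq_bounded[where B=B]) auto

lemma row_param_column_integral:
  assumes Bm: "sets_measurable Bs" and Bs: "\<And>y. y \<in> {0..1} \<Longrightarrow> Bs y \<in> sets I01"
    and d: "kernel_meas d" "kernel_bounded d B"
  shows "(LINT p|I01sq. \<bar>row d (Bs (fst p)) (snd p)\<bar>) \<le> 2 * cut_norm d"
proof -
  have "(LINT p|I01sq. \<bar>row d (Bs (fst p)) (snd p)\<bar>) = (LINT y|I01. LINT z|I01. \<bar>row d (Bs y) z\<bar>)"
    using I01P.integral_fst[of "\<lambda>y z. \<bar>row d (Bs y) z\<bar>"]
      row_param_integrable[OF Bm d fst_snd_measurable_I01sq(2)]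
    unfolding I01sq_def by (simp add: split_beta')
  also have "\<dots> \<le> 2 * cut_norm d"
    by (rule integral_I01_le)
       (use row_abs_integral_le_cut_norm[OF d Bs] cut_norm_nonneg[OF d(2)] in auto)
  finally show ?thesis .
qed

lemma row_param_diagonal_integral:
  assumes Bm: "sets_measurable Bs" and Bs: "\<And>y. y \<in> {0..1} \<Longrightarrow> Bs y \<in> sets I01"
    and d: "kernel_meas d" "kernel_bounded d B"
    and A: "A \<in> sets I01" and m: "0 < m" and st: "staircase m A c Bs"
  shows "(LINT p|I01sq. \<bar>row d (Bs (fst p)) (fst p)\<bar>) \<le> 2 * real m * cut_norm d + B / m"
proof -
  have "(LINT p|I01sq. \<bar>row d (Bs (fst p)) (fst p)\<bar>) = (LINT y|I01. LINT z|I01. \<bar>row d (Bs y) y\<bar>)"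
    using I01P.integral_fst[of "\<lambda>y z. \<bar>row d (Bs y) y\<bar>"]
      row_param_integrable[OF Bm d fst_snd_measurable_I01sq(1)]
    unfolding I01sq_def by (simp add: split_beta')
  also have "\<dots> = (LINT y|I01. \<bar>row d (Bs y) y\<bar>)"
    using measure_I01_space by simp
  also have "\<dots> \<le> 2 * real m * cut_norm d + B / m"
    by (rule row_abs_integral_staircase[OF d A m st Bs])
  finally show ?thesis .
qed

text \<open>The core estimate: replacing a by b changes a half of Gamma_A by at most the two
  error terms for d = a - b, since the positive part is 1-Lipschitz.\<close>
lemma half_Gamma_stable:
  assumes a: "kernel_meas a" "kernel_bounded a 1" and b: "kernel_meas b" "kernel_bounded b 1"
    and R: "(\<lambda>p. indicator R p :: real) \<in> borel_measurable I01sq" and A: "A \<in> sets I01" and m: "0 < m"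
    and Bm: "sets_measurable Bs" and Bs: "\<And>y. y \<in> {0..1} \<Longrightarrow> Bs y \<in> sets I01"
    and st: "staircase m A c Bs"
  shows "half_Gamma a R Bs \<le> half_Gamma b R Bs
           + (2 + 2 * real m) * cut_norm (\<lambda>x y. a x y - b x y) + 2 / m"
proof -
  define d where "d = (\<lambda>x y. a x y - b x y)"
  have d: "kernel_meas d" "kernel_bounded d 2" unfolding d_def using kernel_diff[OF a(1) b(1) a(2) b(2)] by auto
  define G :: "(real \<Rightarrow> real \<Rightarrow> real) \<Rightarrow> real \<times> real \<Rightarrow> real"
    where "G w p = indicator R p * max 0 (row w (Bs (fst p)) (snd p) - row w (Bs (fst p)) (fst p))" for w p
  define H1 :: "real \<times> real \<Rightarrow> real" where "H1 p = \<bar>row d (Bs (fst p)) (snd p)\<bar>" for p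
  define H2 :: "real \<times> real \<Rightarrow> real" where "H2 p = \<bar>row d (Bs (fst p)) (fst p)\<bar>" for p
  have intG: "integrable I01sq (G w)" if w: "kernel_meas w" "kernel_bounded w 1" for w
    unfolding G_def
  proof (rule integrable_I01sq_bounded[where B=2])
    show "(\<lambda>p. indicator R p * max 0 (row w (Bs (fst p)) (snd p) - row w (Bs (fst p)) (fst p)))
            \<in> borel_measurable I01sq"
      using R row_param_measurable[OF Bm w(1) fst_snd_measurable_I01sq(2)]
        row_param_measurable[OF Bm w(1) fst_snd_measurable_I01sq(1)] by simp
    fix x y :: real assume "x \<in> {0..1}" "y \<in> {0..1}"
    then have "\<bar>row w (Bs x) y\<bar> \<le> 1" "\<bar>row w (Bs x) x\<bar> \<le> 1" using row_abs_le[OF w(2)] by auto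
    then show "\<bar>indicator R (x, y) * max 0 (row w (Bs (fst (x, y))) (snd (x, y)) - row w (Bs (fst (x, y))) (fst (x, y)))\<bar> \<le> 2"
      by (auto simp: indicator_def)
  qed
  have intH: "integrable I01sq H1" "integrable I01sq H2"
    unfolding H1_def H2_def using row_param_integrable[OF Bm d] fst_snd_measurable_I01sq by auto
  have pointwise: "G a p \<le> G b p + H1 p + H2 p" if "p \<in> space I01sq" for p
  proof -
    have "fst p \<in> {0..1}" "snd p \<in> {0..1}" using that by (auto simp: mem_Times_iff)
    then have "row d (Bs (fst p)) z = row a (Bs (fst p)) z - row b (Bs (fst p)) z" if "z \<in> {0..1}" for z
      unfolding d_def using row_diff_kernel[OF a(1) b(1) a(2) b(2) Bs that] by simp
    then show ?thesis
      using \<open>fst p \<in> {0..1}\<close> \<open>snd p \<in> {0..1}\<close> unfolding G_def H1_def H2_def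
      by (auto simp: indicator_def)
  qed
  have "half_Gamma a R Bs = (LINT p|I01sq. G a p)"
    unfolding G_def by (rule half_Gamma_rows[OF a Bs])
  also have "\<dots> \<le> (LINT p|I01sq. G b p + H1 p + H2 p)"
    using intG[OF a] intG[OF b] intH pointwise by (intro integral_mono) auto
  also have "\<dots> = half_Gamma b R Bs + (LINT p|I01sq. H1 p) + (LINT p|I01sq. H2 p)"
    using intG[OF b] intH half_Gamma_rows[OF b Bs] unfolding G_def by simp
  finally show ?thesis
    using row_param_column_integral[OF Bm Bs d] row_param_diagonal_integral[OF Bm Bs d A m st]
    unfolding d_def H1_def H2_def by (simp add: algebra_simps)
qed

lemma sets_measurable_lower: "A \<in> sets I01 \<Longrightarrow> sets_measurable (\<lambda>y. A \<inter> {0..y})"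
  unfolding sets_measurable_def indicator_inter_arith
  using indicator_comp_measurable[OF _ fst_snd_measurable_I01sq(2)]
    indicator_interval_measurable[OF fst_snd_measurable_I01sq] by simp

lemma sets_measurable_upper: "A \<in> sets I01 \<Longrightarrow> sets_measurable (\<lambda>y. A \<inter> {y..1})"
  unfolding sets_measurable_def indicator_inter_arith
  using indicator_comp_measurable[OF _ fst_snd_measurable_I01sq(2)]
    indicator_interval_measurable[OF fst_snd_measurable_I01sq] by simp

lemma sets_lower_upper:
  assumes A: "A \<in> sets I01"
  shows "A \<inter> {0..y} \<in> sets I01" "A \<inter> {y..1} \<in> sets I01"
proof -
  have "{x\<in>space I01. x \<le> y} \<in> sets I01" "{x\<in>space I01. y \<le> x} \<in> sets I01" by measurable
  moreover have "A \<inter> {0..y} = A \<inter> {x\<in>space I01. x \<le> y}" "A \<inter> {y..1} = A \<inter> {x\<in>space I01. y \<le> x}"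
    using sets.sets_into_space[OF A] by auto
  ultimately show "A \<inter> {0..y} \<in> sets I01" "A \<inter> {y..1} \<in> sets I01" using A by auto
qed

lemma indicator_order_measurable:
  "(\<lambda>p. indicator {(y,z). y < z} p :: real) \<in> borel_measurable I01sq"
  "(\<lambda>p. indicator {(u,v). v < u} p :: real) \<in> borel_measurable I01sq"
proof -
  have "(\<lambda>p. indicator {(y,z). y < z} p :: real) = (\<lambda>p. if fst p < snd p then 1 else 0)"
       "(\<lambda>p. indicator {(u,v). v < u} p :: real) = (\<lambda>p. if snd p < fst p then 1 else 0)"
    by (auto simp: indicator_def)
  then show "(\<lambda>p. indicator {(y,z). y < z} p :: real) \<in> borel_measurable I01sq"
    "(\<lambda>p. indicator {(u,v). v < u} p :: real) \<in> borel_measurable I01sq"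
    unfolding I01sq_def by simp_all
qed

text \<open>Gamma_A is the sum of two halves; the second one, written with the roles of y and z
  exchanged, takes the shape of half_Gamma after swapping the coordinates.\<close>
lemma Gamma_A_halves:
  assumes w: "kernel_meas w" and A: "A \<in> sets I01"
  shows "Gamma_A w A = half_Gamma w {(y,z). y < z} (\<lambda>y. A \<inter> {0..y})
                     + half_Gamma w {(u,v). v < u} (\<lambda>u. A \<inter> {u..1})"
proof -
  define g where "g p = indicator {(u,v). v < u} p *
     max 0 (LINT x|I01. indicator (A \<inter> {fst p..1}) x * (w x (snd p) - w x (fst p)))" for p :: "real \<times> real"
  have gm: "g \<in> borel_measurable I01sq"
    unfolding g_def
    using half_Gamma_integrand_measurable[OF sets_measurable_upper[OF A] w indicator_order_measurable(2)] by simp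
  have "(\<lambda>p. (snd p, fst p)) \<in> measurable I01sq I01sq" unfolding I01sq_def by measurable
  from measurable_compose[OF this gm]
  have gsw: "(\<lambda>p. g (snd p, fst p)) \<in> borel_measurable (I01 \<Otimes>\<^sub>M I01)" by (simp add: I01sq_def)
  have "(LINT p|(I01 \<Otimes>\<^sub>M I01). g (snd p, fst p)) = (\<integral>(x,y). g (snd (y,x), fst (y,x)) \<partial>(I01 \<Otimes>\<^sub>M I01))"
    using I01P.integral_product_swap[OF gsw] by simp
  also have "\<dots> = half_Gamma w {(u,v). v < u} (\<lambda>u. A \<inter> {u..1})"
    unfolding half_Gamma_def I01sq_def g_def by (simp add: split_beta')
  finally have "(LINT p|(I01 \<Otimes>\<^sub>M I01). g (snd p, fst p)) = half_Gamma w {(u,v). v < u} (\<lambda>u. A \<inter> {u..1})" .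
  moreover have "(\<lambda>p. g (snd p, fst p)) = (\<lambda>p. indicator {(y,z). y < z} p *
        max 0 (LINT x|I01. indicator (A \<inter> {snd p..1}) x * (w x (fst p) - w x (snd p))))"
    unfolding g_def by (auto simp: indicator_def fun_eq_iff)
  ultimately show ?thesis unfolding Gamma_A_def half_Gamma_def I01sq_def by simp
qed

lemma Gamma_A_stable:
  assumes a: "kernel_meas a" "kernel_bounded a 1" and b: "kernel_meas b" "kernel_bounded b 1"
    and A: "A \<in> sets I01" and m: "0 < m"
  shows "Gamma_A a A \<le> Gamma_A b A + (4 + 4 * real m) * cut_norm (\<lambda>x y. a x y - b x y) + 4 / m"
  using half_Gamma_stable[OF a b indicator_order_measurable(1) A m sets_measurable_lower[OF A]
          sets_lower_upper(1)[OF A] staircase_lower[OF m]]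
        half_Gamma_stable[OF a b indicator_order_measurable(2) A m sets_measurable_upper[OF A]
          sets_lower_upper(2)[OF A] staircase_upper[OF m]]
  unfolding Gamma_A_halves[OF a(1) A] Gamma_A_halves[OF b(1) A] by (simp add: algebra_simps)

text \<open>Each half of Gamma_A lies in [0,2]; this makes the supremum defining Gamma finite.\<close>
lemma Gamma_A_bounds:
  assumes w: "kernel_bounded w 1"
  shows "0 \<le> Gamma_A w A" "Gamma_A w A \<le> 4"
proof -
  show "0 \<le> Gamma_A w A" unfolding Gamma_A_def
    by (intro add_nonneg_nonneg Bochner_Integration.integral_nonneg) (auto simp: indicator_def)
  have inner: "\<bar>LINT x|I01. indicator S x * (w x u - w x v)\<bar> \<le> 2" if "u \<in> {0..1}" "v \<in> {0..1}" for S u v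
  proof (rule integral_I01_abs_le)
    fix x :: real assume "x \<in> {0..1}"
    then have "\<bar>w x u\<bar> \<le> 1" "\<bar>w x v\<bar> \<le> 1" using w that unfolding kernel_bounded_def by auto
    then show "\<bar>indicator S x * (w x u - w x v)\<bar> \<le> 2" by (auto simp: indicator_def)
  qed
  have "\<bar>LINT p|I01sq. indicator {(y,z). y < z} p *
        max 0 (LINT x|I01. indicator (A \<inter> {0..fst p}) x * (w x (snd p) - w x (fst p)))\<bar> \<le> 2"
  proof (rule integral_I01sq_abs_le)
    fix y z :: real assume "y \<in> {0..1}" "z \<in> {0..1}"
    with inner[of z y "A \<inter> {0..y}"] show "\<bar>indicator {(y,z). y < z} (y, z) * max 0 (LINT x|I01.
      indicator (A \<inter> {0..fst (y, z)}) x * (w x (snd (y, z)) - w x (fst (y, z))))\<bar> \<le> 2"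
      by (auto simp: indicator_def)
  qed
  moreover have "\<bar>LINT p|I01sq. indicator {(y,z). y < z} p *
        max 0 (LINT x|I01. indicator (A \<inter> {snd p..1}) x * (w x (fst p) - w x (snd p)))\<bar> \<le> 2"
  proof (rule integral_I01sq_abs_le)
    fix y z :: real assume "y \<in> {0..1}" "z \<in> {0..1}"
    with inner[of y z "A \<inter> {z..1}"] show "\<bar>indicator {(y,z). y < z} (y, z) * max 0 (LINT x|I01.
      indicator (A \<inter> {snd (y, z)..1}) x * (w x (fst (y, z)) - w x (snd (y, z))))\<bar> \<le> 2"
      by (auto simp: indicator_def)
  qed
  ultimately show "Gamma_A w A \<le> 4" unfolding Gamma_A_def I01sq_def by linarith
qed

lemma Gamma_A_le_Gamma: "kernel_bounded w 1 \<Longrightarrow> A \<in> sets I01 \<Longrightarrow> Gamma_A w A \<le> Gamma w"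
  unfolding Gamma_def
  by (rule cSup_upper) (auto intro!: bdd_aboveI[where M=4] simp: Gamma_A_bounds)

lemma Gamma_nonneg: "kernel_bounded w 1 \<Longrightarrow> 0 \<le> Gamma w"
  using Gamma_A_le_Gamma[of w "{}"] Gamma_A_bounds(1)[of w "{}"] by auto

lemma Gamma_stable:
  assumes a: "kernel_meas a" "kernel_bounded a 1" and b: "kernel_meas b" "kernel_bounded b 1"
    and m: "0 < m"
  shows "Gamma a \<le> Gamma b + (4 + 4 * real m) * cut_norm (\<lambda>x y. a x y - b x y) + 4 / m"
  unfolding Gamma_def[of a]
proof (rule cSup_least)
  show "{Gamma_A a A |A. A \<in> sets I01} \<noteq> {}" by auto
  fix g assume "g \<in> {Gamma_A a A |A. A \<in> sets I01}"
  then obtain A where A: "A \<in> sets I01" and g: "g = Gamma_A a A" by auto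
  show "g \<le> Gamma b + (4 + 4 * real m) * cut_norm (\<lambda>x y. a x y - b x y) + 4 / m"
    using Gamma_A_stable[OF a b A m] Gamma_A_le_Gamma[OF b(2) A] unfolding g by linarith
qed

section \<open>Measure preserving relabellings\<close>

lemma meas_pres_cong:
  assumes "meas_pres f" "\<And>x. x \<in> {0..1} \<Longrightarrow> f x = g x"
  shows "meas_pres g"
proof -
  have "g \<in> measurable I01 I01" using assms measurable_cong[of I01 f g I01] unfolding meas_pres_def by auto
  moreover have "g -` B \<inter> space I01 = f -` B \<inter> space I01" for B using assms(2) by auto
  ultimately show ?thesis using assms(1) unfolding meas_pres_def by simp
qed

lemma meas_pres_comp:
  assumes f: "meas_pres f" and g: "meas_pres g"
  shows "meas_pres (\<lambda>x. g (f x))"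
  unfolding meas_pres_def
proof safe
  have mf: "f \<in> measurable I01 I01" and mg: "g \<in> measurable I01 I01" using f g unfolding meas_pres_def by auto
  show "(\<lambda>x. g (f x)) \<in> measurable I01 I01" using measurable_comp[OF mf mg] by (simp add: o_def)
  fix B assume B: "B \<in> sets I01"
  have gB: "g -` B \<inter> space I01 \<in> sets I01" using measurable_sets[OF mg B] .
  have "(\<lambda>x. g (f x)) -` B \<inter> space I01 = f -` (g -` B \<inter> space I01) \<inter> space I01"
    using measurable_space[OF mf] by auto
  then have "emeasure I01 ((\<lambda>x. g (f x)) -` B \<inter> space I01) = emeasure I01 (f -` (g -` B \<inter> space I01) \<inter> space I01)"
    by (simp only:)
  also have "\<dots> = emeasure I01 (g -` B \<inter> space I01)" using f gB unfolding meas_pres_def by blast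
  also have "\<dots> = emeasure I01 B" using g B unfolding meas_pres_def by blast
  finally show "emeasure I01 ((\<lambda>x. g (f x)) -` B \<inter> space I01) = emeasure I01 B" .
qed

lemma Phi_D:
  assumes "\<phi> \<in> Phi"
  shows "\<phi> \<in> measurable I01 I01" "\<And>x. x \<in> {0..1} \<Longrightarrow> \<phi> x \<in> {0..1}"
    "\<And>x. x \<in> {0..1} \<Longrightarrow> the_inv_into {0..1} \<phi> (\<phi> x) = x"
    "\<And>x. x \<in> {0..1} \<Longrightarrow> \<phi> (the_inv_into {0..1} \<phi> x) = x"
    "\<And>x. x \<in> {0..1} \<Longrightarrow> the_inv_into {0..1} \<phi> x \<in> {0..1}"
    "the_inv_into {0..1} \<phi> \<in> measurable I01 I01"
proof -
  have b: "bij_betw \<phi> {0..1} {0..1}" and m: "meas_pres \<phi>" "meas_pres (the_inv_into {0..1} \<phi>)"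
    using assms unfolding Phi_def by auto
  have inj: "inj_on \<phi> {0..1}" and im: "\<phi> ` {0..1} = {0..1}" using b unfolding bij_betw_def by auto
  show "\<phi> \<in> measurable I01 I01" "the_inv_into {0..1} \<phi> \<in> measurable I01 I01"
    using m unfolding meas_pres_def by auto
  fix x :: real assume x: "x \<in> {0..1}"
  show "\<phi> x \<in> {0..1}" using x im by auto
  show "the_inv_into {0..1} \<phi> (\<phi> x) = x" by (rule the_inv_into_f_f[OF inj x])
  show "\<phi> (the_inv_into {0..1} \<phi> x) = x" by (rule f_the_inv_into_f[OF inj]) (use x im in simp)
  show "the_inv_into {0..1} \<phi> x \<in> {0..1}" by (rule the_inv_into_into[OF inj]) (use x im in auto)
qed

lemma id_Phi: "(\<lambda>x. x) \<in> Phi"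
proof -
  have mp: "meas_pres (\<lambda>x. x)" unfolding meas_pres_def
  proof safe
    show "(\<lambda>x. x) \<in> measurable I01 I01" by (rule measurable_ident_sets) simp
    fix B assume "B \<in> sets I01"
    then have "B \<inter> space I01 = B" using sets.sets_into_space by blast
    then show "emeasure I01 ((\<lambda>x. x) -` B \<inter> space I01) = emeasure I01 B" by simp
  qed
  have "meas_pres (the_inv_into {0..1} (\<lambda>x::real. x))"
    by (rule meas_pres_cong[OF mp]) (auto simp: the_inv_into_f_eq)
  then show ?thesis unfolding Phi_def using mp by (auto simp: bij_betw_def)
qed

lemma comp_Phi:
  assumes p: "\<phi> \<in> Phi" and q: "\<psi> \<in> Phi"
  shows "(\<lambda>x. \<psi> (\<phi> x)) \<in> Phi"
proof -
  have "bij_betw \<phi> {0..1} {0..1}" "bij_betw \<psi> {0..1} {0..1}" using p q unfolding Phi_def by auto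
  then have bc: "bij_betw (\<lambda>x. \<psi> (\<phi> x)) {0..1} {0..1}" using bij_betw_trans by (simp add: o_def)
  have mpc: "meas_pres (\<lambda>x. \<psi> (\<phi> x))" using meas_pres_comp p q unfolding Phi_def by auto
  have mpi: "meas_pres (\<lambda>x. the_inv_into {0..1} \<phi> (the_inv_into {0..1} \<psi> x))"
    using meas_pres_comp p q unfolding Phi_def by auto
  have "meas_pres (the_inv_into {0..1} (\<lambda>x. \<psi> (\<phi> x)))"
  proof (rule meas_pres_cong[OF mpi])
    fix x :: real assume x: "x \<in> {0..1}"
    show "the_inv_into {0..1} \<phi> (the_inv_into {0..1} \<psi> x) = the_inv_into {0..1} (\<lambda>x. \<psi> (\<phi> x)) x"
      by (rule the_inv_into_f_eq[symmetric])
         (use bc Phi_D[OF p] Phi_D[OF q] x in \<open>auto simp: bij_betw_def\<close>)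
  qed
  then show ?thesis unfolding Phi_def using bc mpc by simp
qed

lemma inv_Phi:
  assumes p: "\<phi> \<in> Phi"
  shows "the_inv_into {0..1} \<phi> \<in> Phi"
proof -
  have "bij_betw \<phi> {0..1} {0..1}" using p unfolding Phi_def by auto
  then have bi: "bij_betw (the_inv_into {0..1} \<phi>) {0..1} {0..1}" by (rule bij_betw_the_inv_into)
  have "meas_pres (the_inv_into {0..1} (the_inv_into {0..1} \<phi>))"
  proof (rule meas_pres_cong)
    show "meas_pres \<phi>" using p unfolding Phi_def by auto
    fix x :: real assume x: "x \<in> {0..1}"
    show "\<phi> x = the_inv_into {0..1} (the_inv_into {0..1} \<phi>) x"
      by (rule the_inv_into_f_eq[symmetric]) (use bi Phi_D[OF p] x in \<open>auto simp: bij_betw_def\<close>)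
  qed
  then show ?thesis using p bi unfolding Phi_def by auto
qed

lemma relabel_kernel:
  assumes "kernel_meas w" "kernel_bounded w B" "\<phi> \<in> Phi"
  shows "kernel_meas (relabel w \<phi>)" "kernel_bounded (relabel w \<phi>) B"
proof -
  have "(\<lambda>q. \<phi> (fst q)) \<in> measurable I01sq I01" "(\<lambda>q. \<phi> (snd q)) \<in> measurable I01sq I01"
    using Phi_D(1)[OF assms(3)] unfolding I01sq_def by measurable
  from kernel_meas_comp[OF assms(1) this] show "kernel_meas (relabel w \<phi>)"
    unfolding kernel_meas_def relabel_def .
  show "kernel_bounded (relabel w \<phi>) B"
    using assms(2) Phi_D(2)[OF assms(3)] unfolding kernel_bounded_def relabel_def by auto
qed

lemma distr_I01: assumes "meas_pres \<phi>" shows "distr I01 I01 \<phi> = I01"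
proof (rule measure_eqI)
  fix A assume "A \<in> sets (distr I01 I01 \<phi>)"
  then have A: "A \<in> sets I01" by simp
  have m: "\<phi> \<in> measurable I01 I01" using assms unfolding meas_pres_def by auto
  show "emeasure (distr I01 I01 \<phi>) A = emeasure I01 A"
    using assms A unfolding meas_pres_def by (simp add: emeasure_distr[OF m A])
qed simp

lemma distr_I01sq: assumes p: "\<phi> \<in> Phi"
  shows "distr I01sq I01sq (\<lambda>(x,y). (\<phi> x, \<phi> y)) = I01sq"
proof -
  have mp: "meas_pres \<phi>" using p unfolding Phi_def by auto
  have m: "\<phi> \<in> measurable I01 I01" by (rule Phi_D(1)[OF p])
  have "distr I01 I01 \<phi> \<Otimes>\<^sub>M distr I01 I01 \<phi> = distr (I01 \<Otimes>\<^sub>M I01) (I01 \<Otimes>\<^sub>M I01) (\<lambda>(x, y). (\<phi> x, \<phi> y))"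
    by (rule pair_measure_distr[OF m m]) (simp add: distr_I01[OF mp] I01.sigma_finite_measure_axioms)
  then show ?thesis unfolding distr_I01[OF mp] I01sq_def by simp
qed

text \<open>Relabelling does not increase the cut norm: a rectangle S x T for the relabelled
  kernel is the rectangle of the preimages under the inverse for the original one.\<close>
lemma cut_norm_relabel_le:
  assumes g: "kernel_meas f" and b: "kernel_bounded f B" and p: "\<phi> \<in> Phi"
  shows "cut_norm (relabel f \<phi>) \<le> cut_norm f"
  unfolding cut_norm_def[of "relabel f \<phi>"] I01sq_def[symmetric]
proof (rule cSup_least)
  fix v assume "v \<in> {\<bar>LINT p|I01sq. indicator (S \<times> T) p * relabel f \<phi> (fst p) (snd p)\<bar> |S T. S \<in> sets I01 \<and> T \<in> sets I01}"
  then obtain S T where S: "S \<in> sets I01" and T: "T \<in> sets I01"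
    and v: "v = \<bar>LINT p|I01sq. indicator (S \<times> T) p * relabel f \<phi> (fst p) (snd p)\<bar>" by blast
  define S' where "S' = the_inv_into {0..1} \<phi> -` S \<inter> space I01"
  define T' where "T' = the_inv_into {0..1} \<phi> -` T \<inter> space I01"
  have S': "S' \<in> sets I01" and T': "T' \<in> sets I01"
    unfolding S'_def T'_def using measurable_sets[OF Phi_D(6)[OF p]] S T by auto
  define h where "h q = indicator (S' \<times> T') q * f (fst q) (snd q)" for q :: "real \<times> real"
  have hm: "h \<in> borel_measurable I01sq"
    using indicator_comp_measurable[OF S' fst_snd_measurable_I01sq(1)]
      indicator_comp_measurable[OF T' fst_snd_measurable_I01sq(2)] g[unfolded kernel_meas_def]
    unfolding h_def by (simp add: indicator_times mult_ac)
  have mP: "(\<lambda>(x,y). (\<phi> x, \<phi> y)) \<in> measurable I01sq I01sq"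
    using Phi_D(1)[OF p] unfolding I01sq_def by measurable
  have "(LINT p|I01sq. indicator (S \<times> T) p * relabel f \<phi> (fst p) (snd p)) = (LINT p|I01sq. h ((\<lambda>(x,y). (\<phi> x, \<phi> y)) p))"
  proof (rule Bochner_Integration.integral_cong[OF refl])
    fix p assume "p \<in> space I01sq"
    then have "fst p \<in> {0..1}" "snd p \<in> {0..1}" by (auto simp: mem_Times_iff)
    then have "\<phi> (fst p) \<in> S' \<longleftrightarrow> fst p \<in> S" "\<phi> (snd p) \<in> T' \<longleftrightarrow> snd p \<in> T"
      unfolding S'_def T'_def using Phi_D[OF p] by auto
    then show "indicator (S \<times> T) p * relabel f \<phi> (fst p) (snd p) = h ((\<lambda>(x,y). (\<phi> x, \<phi> y)) p)"
      unfolding h_def relabel_def by (auto simp: indicator_def split_beta' mem_Times_iff)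
  qed
  also have "\<dots> = integral\<^sup>L (distr I01sq I01sq (\<lambda>(x,y). (\<phi> x, \<phi> y))) h"
    by (rule integral_distr[OF mP hm, symmetric])
  also have "\<dots> = (LINT q|I01sq. indicator (S' \<times> T') q * f (fst q) (snd q))"
    unfolding distr_I01sq[OF p] h_def ..
  finally show "v \<le> cut_norm f"
    using v rectangle_integral_le_cut_norm[OF b S' T'] unfolding I01sq_def by simp
qed blast

section \<open>Continuity of Gamma_tilde\<close>

lemma Gamma_tilde_le:
  assumes w: "w \<in> W0" and p: "\<phi> \<in> Phi"
  shows "Gamma_tilde w \<le> Gamma (relabel w \<phi>)"
  unfolding Gamma_tilde_def
proof (rule cInf_lower)
  show "Gamma (relabel w \<phi>) \<in> {Gamma (relabel w \<phi>) |\<phi>. \<phi> \<in> Phi}" using p by blast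
  show "bdd_below {Gamma (relabel w \<phi>) |\<phi>. \<phi> \<in> Phi}"
    using W0_kernel[OF w] by (auto intro!: bdd_belowI[where m=0] Gamma_nonneg relabel_kernel)
qed

lemma Gamma_tilde_greatest:
  assumes "\<And>\<phi>. \<phi> \<in> Phi \<Longrightarrow> x \<le> Gamma (relabel w \<phi>)"
  shows "x \<le> Gamma_tilde w"
  unfolding Gamma_tilde_def by (rule cInf_greatest) (use assms id_Phi in auto)

lemma Gamma_tilde_le_matching:
  assumes u: "u \<in> W0" and w: "w \<in> W0" and m: "0 < m"
    and match: "\<And>\<phi>. \<phi> \<in> Phi \<Longrightarrow> \<exists>\<theta>\<in>Phi. cut_norm (\<lambda>x y. relabel u \<theta> x y - relabel w \<phi> x y) \<le> c"
  shows "Gamma_tilde u \<le> Gamma_tilde w + (4 + 4 * real m) * c + 4 / m"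
proof -
  have "Gamma_tilde u - ((4 + 4 * real m) * c + 4 / m) \<le> Gamma_tilde w"
  proof (rule Gamma_tilde_greatest)
    fix \<phi> assume p: "\<phi> \<in> Phi"
    then obtain \<theta> where q: "\<theta> \<in> Phi" and c: "cut_norm (\<lambda>x y. relabel u \<theta> x y - relabel w \<phi> x y) \<le> c"
      using match by blast
    have "Gamma_tilde u \<le> Gamma (relabel u \<theta>)" by (rule Gamma_tilde_le[OF u q])
    also have "\<dots> \<le> Gamma (relabel w \<phi>) + (4 + 4 * real m) * cut_norm (\<lambda>x y. relabel u \<theta> x y - relabel w \<phi> x y) + 4 / m"
      using W0_kernel[OF u] W0_kernel[OF w]
      by (intro Gamma_stable[OF _ _ _ _ m] relabel_kernel[OF _ _ q] relabel_kernel[OF _ _ p]) auto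
    also have "\<dots> \<le> Gamma (relabel w \<phi>) + (4 + 4 * real m) * c + 4 / m"
      using c by (simp add: mult_left_mono)
    finally show "Gamma_tilde u - ((4 + 4 * real m) * c + 4 / m) \<le> Gamma (relabel w \<phi>)" by simp
  qed
  then show ?thesis by simp
qed

text \<open>Psi provides the matchings in both directions: psi after phi
  for w, and the inverse of psi after phi for u.\<close>
lemma Gamma_tilde_relabel_bound:
  assumes u: "u \<in> W0" and w: "w \<in> W0" and q: "\<psi> \<in> Phi" and m: "0 < m"
  shows "\<bar>Gamma_tilde u - Gamma_tilde w\<bar>
           \<le> (4 + 4 * real m) * cut_norm (\<lambda>x y. u x y - relabel w \<psi> x y) + 4 / m"
proof -
  define D where "D = (\<lambda>x y. u x y - relabel w \<psi> x y)"
  have D: "kernel_meas D" "kernel_bounded D 2"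
    unfolding D_def using W0_kernel[OF u] W0_kernel[OF w] relabel_kernel[OF _ _ q]
    by (auto intro: kernel_diff)
  have "Gamma_tilde w \<le> Gamma_tilde u + (4 + 4 * real m) * cut_norm D + 4 / m"
  proof (rule Gamma_tilde_le_matching[OF w u m])
    fix \<phi> assume p: "\<phi> \<in> Phi"
    have "cut_norm (\<lambda>x y. relabel w (\<lambda>x. \<psi> (\<phi> x)) x y - relabel u \<phi> x y) = cut_norm (relabel D \<phi>)"
      using cut_norm_uminus[of "relabel D \<phi>"] unfolding D_def relabel_def by simp
    also have "\<dots> \<le> cut_norm D" by (rule cut_norm_relabel_le[OF D p])
    finally show "\<exists>\<theta>\<in>Phi. cut_norm (\<lambda>x y. relabel w \<theta> x y - relabel u \<phi> x y) \<le> cut_norm D"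
      using comp_Phi[OF p q] by blast
  qed
  moreover have "Gamma_tilde u \<le> Gamma_tilde w + (4 + 4 * real m) * cut_norm D + 4 / m"
  proof (rule Gamma_tilde_le_matching[OF u w m])
    fix \<phi> assume p: "\<phi> \<in> Phi"
    define \<theta> where "\<theta> = (\<lambda>x. the_inv_into {0..1} \<psi> (\<phi> x))"
    have "cut_norm (\<lambda>x y. relabel u \<theta> x y - relabel w \<phi> x y) = cut_norm (relabel D \<theta>)"
      by (rule cut_norm_cong) (use Phi_D(2)[OF p] Phi_D(4)[OF q] in \<open>simp add: \<theta>_def D_def relabel_def\<close>)
    also have "\<dots> \<le> cut_norm D"
      unfolding \<theta>_def by (rule cut_norm_relabel_le[OF D comp_Phi[OF p inv_Phi[OF q]]])
    finally show "\<exists>\<theta>\<in>Phi. cut_norm (\<lambda>x y. relabel u \<theta> x y - relabel w \<phi> x y) \<le> cut_norm D"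
      using comp_Phi[OF p inv_Phi[OF q]] unfolding \<theta>_def by blast
  qed
  ultimately show ?thesis unfolding D_def by linarith
qed

lemma Gamma_tilde_dist_bound:
  assumes u: "u \<in> W0" and w: "w \<in> W0" and m: "0 < m"
  shows "\<bar>Gamma_tilde u - Gamma_tilde w\<bar> \<le> (4 + 4 * real m) * cut_dist u w + 4 / m"
proof (rule field_le_epsilon)
  fix e :: real assume e: "0 < e"
  define L where "L = 4 + 4 * real m"
  have L: "0 < L" unfolding L_def by simp
  have "Inf {cut_norm (\<lambda>x y. u x y - relabel w \<phi> x y) |\<phi>. \<phi> \<in> Phi} < cut_dist u w + e / L"
    unfolding cut_dist_def using e L by simp
  from cInf_lessD[OF _ this] obtain \<psi> where q: "\<psi> \<in> Phi"
    and lt: "cut_norm (\<lambda>x y. u x y - relabel w \<psi> x y) < cut_dist u w + e / L"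
    using id_Phi by blast
  have "L * cut_norm (\<lambda>x y. u x y - relabel w \<psi> x y) < L * (cut_dist u w + e / L)"
    using mult_strict_left_mono[OF lt L] .
  also have "\<dots> = L * cut_dist u w + e" using L by (simp add: field_simps)
  finally show "\<bar>Gamma_tilde u - Gamma_tilde w\<bar> \<le> (4 + 4 * real m) * cut_dist u w + 4 / m + e"
    using Gamma_tilde_relabel_bound[OF u w q m] unfolding L_def by linarith
qed

lemma tendsto_by_error_bound:
  fixes x c :: "nat \<Rightarrow> real"
  assumes c: "c \<longlonglongrightarrow> 0" and bound: "\<And>\<epsilon>. 0 < \<epsilon> \<Longrightarrow> \<exists>K. \<forall>n. \<bar>x n - L\<bar> \<le> K * c n + \<epsilon>"
  shows "x \<longlonglongrightarrow> L"
proof (rule LIMSEQ_I)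
  fix r :: real assume r: "0 < r"
  obtain K where K: "\<And>n. \<bar>x n - L\<bar> \<le> K * c n + r / 2" using bound[of "r / 2"] r by auto
  define M where "M = \<bar>K\<bar> + 1"
  have M: "0 < M" "K \<le> M" "-K \<le> M" unfolding M_def by auto
  obtain N where N: "\<And>n. n \<ge> N \<Longrightarrow> \<bar>c n\<bar> < r / (2 * M)"
    using LIMSEQ_D[OF c, of "r / (2 * M)"] r M by auto
  have "\<bar>x n - L\<bar> < r" if "n \<ge> N" for n
  proof -
    have "K * c n \<le> M * \<bar>c n\<bar>" using M
      by (cases "0 \<le> c n") (use mult_right_mono[of K M "c n"] mult_right_mono[of "-K" M "- c n"] in auto)
    also have "\<dots> < M * (r / (2 * M))" using N[OF that] M by (intro mult_strict_left_mono) auto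
    also have "\<dots> = r / 2" using M by simp
    finally show ?thesis using K[of n] by linarith
  qed
  then show "\<exists>N. \<forall>n\<ge>N. norm (x n - L) < r" by auto
qed

theorem mainTheorem9:
  fixes w :: "real \<Rightarrow> real \<Rightarrow> real" and ws :: "nat \<Rightarrow> real \<Rightarrow> real \<Rightarrow> real"
  assumes "w \<in> W0" and "\<And>n. ws n \<in> W0"
    and "(\<lambda>n. cut_dist (ws n) w) \<longlonglongrightarrow> 0"
  shows "(\<lambda>n. Gamma_tilde (ws n)) \<longlonglongrightarrow> Gamma_tilde w"
proof (rule tendsto_by_error_bound[OF assms(3)])
  fix \<epsilon> :: real assume \<epsilon>: "0 < \<epsilon>"
  define m where "m = nat \<lceil>4 / \<epsilon>\<rceil> + 1"
  have m: "0 < m" unfolding m_def by simp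
  have "4 / \<epsilon> < real m" unfolding m_def by linarith
  then have "4 / real m \<le> \<epsilon>" using \<epsilon> m by (simp add: field_simps)
  then show "\<exists>K. \<forall>n. \<bar>Gamma_tilde (ws n) - Gamma_tilde w\<bar> \<le> K * cut_dist (ws n) w + \<epsilon>"
    using Gamma_tilde_dist_bound[OF assms(2) assms(1) m] by (metis add_left_mono order_trans)
qed

end
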